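(* Let $p\geq 5$ be an odd integer and $s=\frac2p$. For any even integer $n\geq 4$, \[ 2\left(n-\tfrac12\right)^s=2\left(n^2-n+\tfrac14\right)^{s/2}<A_{n,s}^{-1}<2\left(n^2-n+\tfrac34\right)^{s/2}, \] and for any odd integer $n\geq 3$, \[ -2\left(n^2-n+\tfrac34\right)^{s/2}<B_{n,s}^{-1}<-2\left(n^2-n+\tfrac14\right)^{s/2}=-2\left(n-\tfrac12\right)^s. \]
   Context: For an integer $n\geq1$ and real $0<s<1$: $A_{n,s}=\left(\frac{1}{n^s}-\frac{1}{(n+1)^s}\right)+\left(\frac{1}{(n+2)^s}-\frac{1}{(n+3)^s}\right)+\cdots$ and $B_{n,s}=\left(-\frac{1}{n^s}+\frac{1}{(n+1)^s}\right)+\left(-\frac{1}{(n+2)^s}+\frac{1}{(n+3)^s}\right)+\cdots$. *)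

theory Defs
  imports "HOL-Analysis.Analysis"
begin

definition A_ns :: "nat \<Rightarrow> real \<Rightarrow> real" where
  "A_ns n s = (\<Sum>k. 1 / real (n + 2*k) powr s - 1 / real (n + 2*k + 1) powr s)"

definition B_ns :: "nat \<Rightarrow> real \<Rightarrow> real" where
  "B_ns n s = (\<Sum>k. - 1 / real (n + 2*k) powr s + 1 / real (n + 2*k + 1) powr s)"

end

theory Submission
  imports Defs "HOL-Real_Asymp.Real_Asymp"
begin

(* Let f x = x powr -s. The k-th bracket of A_{n,s} is f x - f (x + 1) with x = n + 2k, and
   both bounds come from telescoping: with U x = (x - 1/2) powr -s / 2 and
   L x = (x^2 - x + 3/4) powr (-s/2) / 2 one has, for x >= 3,
     L x - L (x + 2) < f x - f (x + 1) < U x - U (x + 2),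
   hence L n < A_{n,s} < U n. Writing c = x + 1/2, the upper step is the strict convexity of
   d |-> f (c - d) - f (c + d) on [0, c). The lower step holds only to order c powr (-s - 3):
   the two sides differ by about s (s + 2) (1 - s) / 8 * c powr (-s - 3), so it needs the
   Taylor expansion of f to order 7 with explicit remainders, and the resulting numerical
   estimate closes for s <= 2/5 and c >= 7/2. Finally B_{n,s} = - A_{n,s}. *)

definition neg_powr_diff :: "real \<Rightarrow> nat \<Rightarrow> real \<Rightarrow> real" where
  "neg_powr_diff \<sigma> m y = (-1)^m * pochhammer \<sigma> m * y powr (-\<sigma> - real m)"

lemma neg_powr_diff_0: "neg_powr_diff \<sigma> 0 = (\<lambda>y. y powr (-\<sigma>))"
  by (simp add: neg_powr_diff_def fun_eq_iff)

lemma DERIV_neg_powr_diff: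
  assumes "y > 0"
  shows "DERIV (neg_powr_diff \<sigma> m) y :> neg_powr_diff \<sigma> (Suc m) y"
proof -
  have "DERIV (neg_powr_diff \<sigma> m) y :>
      (-1)^m * pochhammer \<sigma> m * ((-\<sigma> - real m) * y powr (-\<sigma> - real m - 1))"
    unfolding neg_powr_diff_def[abs_def]
    by (rule derivative_eq_intros refl | use assms in simp)+
  then show ?thesis
    by (simp add: neg_powr_diff_def pochhammer_rec' algebra_simps)
qed

lemma neg_powr_diff_sign:
  assumes "\<sigma> > 0" "y > 0"
  shows "(-1)^m * neg_powr_diff \<sigma> m y > 0"
  using assms by (simp add: neg_powr_diff_def pochhammer_pos flip: power_add mult.assoc)

lemma neg_powr_Taylor_up:
  fixes \<sigma> c h :: real
  assumes "c > 0" "h > 0" "N > 0"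
  shows "\<exists>t. c < t \<and> t < c + h \<and> (c + h) powr (-\<sigma>) =
     (\<Sum>m<N. neg_powr_diff \<sigma> m c / fact m * h^m) + neg_powr_diff \<sigma> N t / fact N * h^N"
  using Taylor_up[where a = c and b = "c + h" and c = c and diff = "neg_powr_diff \<sigma>" and n = N]
  using assms by (simp add: neg_powr_diff_0 DERIV_neg_powr_diff)

lemma neg_powr_Taylor_down:
  fixes \<sigma> c h :: real
  assumes "c - h > 0" "h > 0" "N > 0"
  shows "\<exists>t. c - h < t \<and> t < c \<and> (c - h) powr (-\<sigma>) =
     (\<Sum>m<N. neg_powr_diff \<sigma> m c / fact m * (-h)^m) + neg_powr_diff \<sigma> N t / fact N * (-h)^N"
  using Taylor_down[where a = "c - h" and b = c and c = c and diff = "neg_powr_diff \<sigma>" and n = N]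
  using assms by (simp add: neg_powr_diff_0 DERIV_neg_powr_diff)

lemma neg_powr_linear_lower:
  fixes \<sigma> c h :: real
  assumes "\<sigma> > 0" "c > 0" "h > 0"
  shows "c powr (-\<sigma>) - \<sigma> * h * c powr (-\<sigma> - 1) \<le> (c + h) powr (-\<sigma>)"
proof -
  obtain t where t: "c < t" and e: "(c + h) powr (-\<sigma>) =
     (\<Sum>m<2. neg_powr_diff \<sigma> m c / fact m * h^m) + neg_powr_diff \<sigma> 2 t / fact 2 * h^2"
    using neg_powr_Taylor_up[of c h 2 \<sigma>] assms by auto
  have "neg_powr_diff \<sigma> 2 t > 0"
    using neg_powr_diff_sign[of \<sigma> t 2] assms t by simp
  then show ?thesis
    unfolding e by (simp add: numeral_eq_Suc neg_powr_diff_def)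
qed

lemma neg_powr_quadratic_upper:
  fixes \<sigma> c h :: real
  assumes "\<sigma> > 0" "c > 0" "h > 0"
  shows "(c + h) powr (-\<sigma>) \<le>
    c powr (-\<sigma>) - \<sigma> * h * c powr (-\<sigma> - 1) + \<sigma> * (\<sigma> + 1) / 2 * h^2 * c powr (-\<sigma> - 2)"
proof -
  obtain t where t: "c < t" and e: "(c + h) powr (-\<sigma>) =
     (\<Sum>m<3. neg_powr_diff \<sigma> m c / fact m * h^m) + neg_powr_diff \<sigma> 3 t / fact 3 * h^3"
    using neg_powr_Taylor_up[of c h 3 \<sigma>] assms by auto
  have "neg_powr_diff \<sigma> 3 t < 0"
    using neg_powr_diff_sign[of \<sigma> t 3] assms t by simp
  then have "neg_powr_diff \<sigma> 3 t / fact 3 * h^3 \<le> 0"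
    using assms by (simp add: mult_nonpos_nonneg divide_nonpos_pos)
  moreover have "(\<Sum>m<3. neg_powr_diff \<sigma> m c / fact m * h^m) =
      c powr (-\<sigma>) - \<sigma> * h * c powr (-\<sigma> - 1) + \<sigma> * (\<sigma> + 1) / 2 * h^2 * c powr (-\<sigma> - 2)"
    by (simp add: numeral_eq_Suc neg_powr_diff_def pochhammer_Suc_prod fact_numeral algebra_simps)
  ultimately show ?thesis
    unfolding e by linarith
qed

lemma neg_powr_sym_diff_Taylor:
  fixes \<sigma> \<delta> c :: real
  assumes "\<sigma> > 0" "\<delta> > 0" "c - \<delta> > 0"
  obtains R where "(c - \<delta>) powr (-\<sigma>) - (c + \<delta>) powr (-\<sigma>) = 2 * \<delta> * \<sigma> * c powr (-\<sigma> - 1)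
      + \<delta>^3 / 3 * pochhammer \<sigma> 3 * c powr (-\<sigma> - 3) + \<delta>^5 / 60 * pochhammer \<sigma> 5 * c powr (-\<sigma> - 5) + R"
    and "0 \<le> R" and "R \<le> \<delta>^7 / 2520 * pochhammer \<sigma> 7 * (c - \<delta>) powr (-\<sigma> - 7)"
proof -
  obtain t1 where t1: "c < t1" and e1: "(c + \<delta>) powr (-\<sigma>) =
     (\<Sum>m<7. neg_powr_diff \<sigma> m c / fact m * \<delta>^m) + neg_powr_diff \<sigma> 7 t1 / fact 7 * \<delta>^7"
    using neg_powr_Taylor_up[of c \<delta> 7 \<sigma>] assms by auto
  obtain t2 where t2: "c - \<delta> < t2" and e2: "(c - \<delta>) powr (-\<sigma>) =
     (\<Sum>m<7. neg_powr_diff \<sigma> m c / fact m * (-\<delta>)^m) + neg_powr_diff \<sigma> 7 t2 / fact 7 * (-\<delta>)^7"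
    using neg_powr_Taylor_down[of c \<delta> 7 \<sigma>] assms by auto
  have sum_7: "(\<Sum>m<7. f m) = f 0 + f 1 + f 2 + f 3 + f 4 + f 5 + f 6" for f :: "nat \<Rightarrow> real"
    by (simp add: numeral_eq_Suc)
  define R where "R = pochhammer \<sigma> 7 * \<delta>^7 / 5040 * (t1 powr (-\<sigma> - 7) + t2 powr (-\<sigma> - 7))"
  have "(c - \<delta>) powr (-\<sigma>) - (c + \<delta>) powr (-\<sigma>) = 2 * \<delta> * \<sigma> * c powr (-\<sigma> - 1)
      + \<delta>^3 / 3 * pochhammer \<sigma> 3 * c powr (-\<sigma> - 3) + \<delta>^5 / 60 * pochhammer \<sigma> 5 * c powr (-\<sigma> - 5) + R"
    unfolding e1 e2 sum_7 R_def by (simp add: neg_powr_diff_def fact_numeral algebra_simps)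
  moreover have "0 \<le> R"
    unfolding R_def using assms by (simp add: pochhammer_nonneg)
  moreover have "R \<le> \<delta>^7 / 2520 * pochhammer \<sigma> 7 * (c - \<delta>) powr (-\<sigma> - 7)"
  proof -
    have "t powr (-\<sigma> - 7) \<le> (c - \<delta>) powr (-\<sigma> - 7)" if "c - \<delta> < t" for t
      by (rule powr_mono2') (use assms that in auto)
    from this[of t1] this[of t2] t1 t2 assms
    have "t1 powr (-\<sigma> - 7) + t2 powr (-\<sigma> - 7) \<le> 2 * (c - \<delta>) powr (-\<sigma> - 7)"
      by simp
    then have "R \<le> pochhammer \<sigma> 7 * \<delta>^7 / 5040 * (2 * (c - \<delta>) powr (-\<sigma> - 7))"
      unfolding R_def by (rule mult_left_mono) (use assms in \<open>simp add: pochhammer_nonneg\<close>)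
    then show ?thesis by (simp add: mult_ac)
  qed
  ultimately show thesis by (rule that)
qed

lemma DERIV_neg_powr_reflected:
  fixes \<sigma> c x :: real
  assumes "\<bar>x\<bar> < c"
  shows "DERIV (\<lambda>x. (c - x) powr (-\<sigma>)) x :> \<sigma> * (c - x) powr (-\<sigma> - 1)"
    and "DERIV (\<lambda>x. (c + x) powr (-\<sigma>)) x :> - \<sigma> * (c + x) powr (-\<sigma> - 1)"
proof -
  have "c - x > 0" "c + x > 0" using assms by auto
  have "DERIV (\<lambda>x. (c - x) powr (-\<sigma>)) x :> -\<sigma> * (c - x) powr (-\<sigma> - of_nat 1) * (0 - 1)"
    by (intro DERIV_fun_powr DERIV_diff DERIV_const DERIV_ident) fact
  then show "DERIV (\<lambda>x. (c - x) powr (-\<sigma>)) x :> \<sigma> * (c - x) powr (-\<sigma> - 1)"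
    by simp
  have "DERIV (\<lambda>x. (c + x) powr (-\<sigma>)) x :> -\<sigma> * (c + x) powr (-\<sigma> - of_nat 1) * (0 + 1)"
    by (intro DERIV_fun_powr DERIV_add DERIV_const DERIV_ident) fact
  then show "DERIV (\<lambda>x. (c + x) powr (-\<sigma>)) x :> - \<sigma> * (c + x) powr (-\<sigma> - 1)"
    by simp
qed

lemma neg_powr_sym_sum_strict_mono:
  fixes \<sigma> c a b :: real
  assumes "\<sigma> > 0" "0 \<le> a" "a < b" "b < c"
  shows "(c - a) powr (-\<sigma>) + (c + a) powr (-\<sigma>) < (c - b) powr (-\<sigma>) + (c + b) powr (-\<sigma>)"
proof -
  define f where "f x = (c - x) powr (-\<sigma>) + (c + x) powr (-\<sigma>)" for x
  define f' where "f' x = \<sigma> * (c - x) powr (-\<sigma> - 1) + - \<sigma> * (c + x) powr (-\<sigma> - 1)" for x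
  have deriv: "DERIV f x :> f' x" if "\<bar>x\<bar> < c" for x
    unfolding f_def[abs_def] f'_def using DERIV_neg_powr_reflected[OF that]
    by (intro DERIV_add)
  have "f a < f b"
  proof (rule DERIV_pos_imp_increasing_open[of a b f])
    fix x assume x: "a < x" "x < b"
    have "(c + x) powr (-\<sigma> - 1) < (c - x) powr (-\<sigma> - 1)"
      using assms x by (intro powr_less_mono2_neg) auto
    then show "\<exists>y. DERIV f x :> y \<and> y > 0"
      using deriv[of x] assms x by (intro exI[of _ "f' x"]) (simp add: f'_def)
  next
    show "continuous_on {a..b} f"
      using deriv assms by (intro DERIV_atLeastAtMost_imp_continuous_on) force
  qed fact
  then show ?thesis unfolding f_def .
qed

lemma neg_powr_sym_diff_convex:
  fixes \<sigma> c \<delta> :: real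
  assumes "\<sigma> > 0" "0 < \<delta>" "\<delta> < c"
  shows neg_powr_sym_diff_gt_tangent:
      "2 * \<sigma> * \<delta> * c powr (-\<sigma> - 1) < (c - \<delta>) powr (-\<sigma>) - (c + \<delta>) powr (-\<sigma>)"
    and neg_powr_sym_diff_half_less:
      "(c - \<delta>/2) powr (-\<sigma>) - (c + \<delta>/2) powr (-\<sigma>)
        < ((c - \<delta>) powr (-\<sigma>) - (c + \<delta>) powr (-\<sigma>)) / 2"
proof -
  define g where "g x = (c - x) powr (-\<sigma>) - (c + x) powr (-\<sigma>)" for x
  define g' where "g' x = \<sigma> * ((c - x) powr (-\<sigma> - 1) + (c + x) powr (-\<sigma> - 1))" for x
  have deriv: "DERIV g x :> g' x" if "0 \<le> x" "x \<le> \<delta>" for x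
  proof -
    have "\<bar>x\<bar> < c" using that assms by auto
    from DERIV_diff[OF DERIV_neg_powr_reflected[OF this]] show ?thesis
      unfolding g_def[abs_def] g'_def by (simp add: algebra_simps)
  qed
  have g'_less: "g' x < g' y" if "0 \<le> x" "x < y" "y \<le> \<delta>" for x y
    unfolding g'_def using assms that
    by (intro mult_strict_left_mono neg_powr_sym_sum_strict_mono[of "\<sigma> + 1", simplified]) auto
  have "g 0 = 0" by (simp add: g_def)
  obtain \<xi> where \<xi>: "0 < \<xi>" "\<xi> < \<delta>" and "g \<delta> - g 0 = \<delta> * g' \<xi>"
    using MVT2[of 0 \<delta> g g'] deriv assms by force
  moreover have "\<delta> * g' 0 < \<delta> * g' \<xi>"
    using g'_less[of 0 \<xi>] \<xi> assms by simp
  moreover have "\<delta> * g' 0 = 2 * \<sigma> * \<delta> * c powr (-\<sigma> - 1)"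
    by (simp add: g'_def)
  ultimately have "2 * \<sigma> * \<delta> * c powr (-\<sigma> - 1) < g \<delta>"
    using \<open>g 0 = 0\<close> by linarith
  then show "2 * \<sigma> * \<delta> * c powr (-\<sigma> - 1) < (c - \<delta>) powr (-\<sigma>) - (c + \<delta>) powr (-\<sigma>)"
    unfolding g_def .
  obtain \<xi>1 where \<xi>1: "0 < \<xi>1" "\<xi>1 < \<delta>/2" and "g (\<delta>/2) - g 0 = \<delta>/2 * g' \<xi>1"
    using MVT2[of 0 "\<delta>/2" g g'] deriv assms by auto
  moreover obtain \<xi>2 where \<xi>2: "\<delta>/2 < \<xi>2" "\<xi>2 < \<delta>" and "g \<delta> - g (\<delta>/2) = \<delta>/2 * g' \<xi>2"
    using MVT2[of "\<delta>/2" \<delta> g g'] deriv assms by auto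
  moreover have "\<delta>/2 * g' \<xi>1 < \<delta>/2 * g' \<xi>2"
    using g'_less[of \<xi>1 \<xi>2] \<xi>1 \<xi>2 assms by simp
  ultimately have "g (\<delta>/2) < g \<delta> / 2"
    using \<open>g 0 = 0\<close> by linarith
  then show "(c - \<delta>/2) powr (-\<sigma>) - (c + \<delta>/2) powr (-\<sigma>)
      < ((c - \<delta>) powr (-\<sigma>) - (c + \<delta>) powr (-\<sigma>)) / 2"
    unfolding g_def .
qed

lemma powr_square_base:
  fixes y a :: real
  assumes "y > 0"
  shows "(y^2) powr a = y powr (2 * a)"
  using assms by (simp add: powr_powr flip: powr_numeral)

lemma shifted_square_neg_powr_upper:
  fixes y s :: real
  assumes "y > 0" "s > 0"
  shows "(y^2 + 1/2) powr (-s/2) \<le> y powr (-s) - s/4 * y powr (-s - 2) + s*(s+2)/32 * y powr (-s - 4)"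
proof -
  have "(y^2 + 1/2) powr (-(s/2)) \<le> (y^2) powr (-(s/2)) - s/2 * (1/2) * (y^2) powr (-(s/2) - 1)
      + s/2 * (s/2 + 1) / 2 * (1/2)^2 * (y^2) powr (-(s/2) - 2)"
    by (rule neg_powr_quadratic_upper) (use assms in auto)
  also have "\<dots> = y powr (-s) - s/4 * y powr (-s - 2) + s*(s+2)/32 * y powr (-s - 4)"
    using assms by (simp add: powr_square_base power_divide algebra_simps)
  finally show ?thesis by simp
qed

lemma shifted_square_neg_powr_lower:
  fixes y s :: real
  assumes "y > 0" "s > 0"
  shows "y powr (-s) - s/4 * y powr (-s - 2) \<le> (y^2 + 1/2) powr (-s/2)"
proof -
  have "y powr (-s) - s/4 * y powr (-s - 2) = (y^2) powr (-(s/2)) - s/2 * (1/2) * (y^2) powr (-(s/2) - 1)"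
    using assms by (simp add: powr_square_base algebra_simps)
  also have "\<dots> \<le> (y^2 + 1/2) powr (-(s/2))"
    by (rule neg_powr_linear_lower) (use assms in auto)
  finally show ?thesis by simp
qed

(* Applied with u = 1/c, v = 1/(c - 1) and \<rho> = (c/(c - 1)) powr (s + 3), where c \<ge> 7/2. *)
lemma lower_step_constant_bound:
  fixes s u v \<rho> :: real
  assumes "0 < s" "s \<le> 2/5" "0 < u" "u \<le> 2/7" "0 < v" "v \<le> 2/5" "0 \<le> \<rho>" "\<rho> \<le> (7/5)^4"
  shows "(s+1)/4 + (s+1)*(s+3)*(s+4)/64 * u^2 + (s+1)*(s+3)*(s+4)*(s+5)*(s+6)/2520 * \<rho> * v^4
    + \<rho> * v / 32 < 1/2"
proof -
  have "(s+1)/4 + (s+1)*(s+3)*(s+4)/64 * u^2 + (s+1)*(s+3)*(s+4)*(s+5)*(s+6)/2520 * \<rho> * v^4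
      + \<rho> * v / 32 \<le> (2/5+1)/4 + (2/5+1)*(2/5+3)*(2/5+4)/64 * (2/7)^2
      + (2/5+1)*(2/5+3)*(2/5+4)*(2/5+5)*(2/5+6)/2520 * (7/5)^4 * (2/5)^4 + (7/5)^4 * (2/5) / 32"
    using assms by (intro add_mono mult_mono divide_right_mono power_mono) auto
  also have "\<dots> < 1/2" by (simp add: power_divide)
  finally show ?thesis .
qed

lemma powr_eq_mult_inverse_power:
  fixes y a b :: real
  assumes "y > 0" "a = b - real k"
  shows "y powr a = y powr b * (1/y)^k"
  using assms by (simp add: powr_diff powr_realpow power_one_over divide_inverse power_inverse)

lemma lower_step_remainder_bound:
  fixes s c :: real
  assumes s: "0 < s" "s \<le> 2/5" and c: "c \<ge> 7/2"
  shows "pochhammer s 3 * c powr (-s - 3) / 4 + pochhammer s 5 * c powr (-s - 5) / 64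
    + pochhammer s 7 * (c - 1) powr (-s - 7) / 2520 + s*(s+2)/32 * (c - 1) powr (-s - 4)
    < s*(s+2)/2 * c powr (-s - 3)"
proof -
  define C where "C = c powr (-s - 3)"
  define \<rho> where "\<rho> = (c - 1) powr (-s - 3) / C"
  have c_pos: "c > 0" "c - 1 > 0" using c by auto
  have C_pos: "C > 0" unfolding C_def using c_pos by simp
  have "\<rho> = (c/(c - 1)) powr (s + 3)"
    unfolding \<rho>_def C_def using c_pos
    by (simp add: powr_divide powr_minus divide_simps powr_add[symmetric])
  also have "\<dots> \<le> (c/(c - 1)) powr 4"
    using c_pos s by (intro powr_mono) (auto simp: divide_simps)
  also have "\<dots> = (c/(c - 1))^4"
    using c_pos by simp
  also have "\<dots> \<le> (7/5)^4"
    using c_pos c by (intro power_mono) (auto simp: divide_simps)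
  finally have \<rho>_le: "\<rho> \<le> (7/5)^4" .
  have \<rho>_nonneg: "0 \<le> \<rho>" unfolding \<rho>_def using C_pos by simp
  have powers: "c powr (-s - 5) = C * (1/c)^2" "(c - 1) powr (-s - 7) = \<rho> * C * (1/(c - 1))^4"
    "(c - 1) powr (-s - 4) = \<rho> * C * (1/(c - 1))"
    unfolding \<rho>_def C_def using c_pos C_pos
    by (simp_all add: powr_eq_mult_inverse_power[where b = "-s - 3" and k = 2]
      powr_eq_mult_inverse_power[where b = "-s - 3" and k = 4]
      powr_eq_mult_inverse_power[where b = "-s - 3" and k = 1])
  have pochhammers: "pochhammer s 3 = s*(s+2) * (s+1)"
    "pochhammer s 5 = s*(s+2) * ((s+1)*(s+3)*(s+4))"
    "pochhammer s 7 = s*(s+2) * ((s+1)*(s+3)*(s+4)*(s+5)*(s+6))"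
    by (simp_all add: numeral_eq_Suc pochhammer_Suc algebra_simps)
  have "(s+1)/4 + (s+1)*(s+3)*(s+4)/64 * (1/c)^2 + (s+1)*(s+3)*(s+4)*(s+5)*(s+6)/2520 * \<rho> * (1/(c - 1))^4
    + \<rho> * (1/(c - 1)) / 32 < 1/2"
    using s c_pos c \<rho>_nonneg \<rho>_le by (intro lower_step_constant_bound) (auto simp: divide_simps)
  then have "s*(s+2)*C * ((s+1)/4 + (s+1)*(s+3)*(s+4)/64 * (1/c)^2
      + (s+1)*(s+3)*(s+4)*(s+5)*(s+6)/2520 * \<rho> * (1/(c - 1))^4 + \<rho> * (1/(c - 1)) / 32)
      < s*(s+2)*C * (1/2)"
    using s C_pos by (intro mult_strict_left_mono) auto
  then show ?thesis
    unfolding powers pochhammers C_def[symmetric] by (simp add: field_simps)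
qed

lemma lower_telescope_step:
  fixes s c :: real
  assumes s: "0 < s" "s \<le> 2/5" and c: "c \<ge> 7/2"
  shows "((c - 1)^2 + 1/2) powr (-s/2) - ((c + 1)^2 + 1/2) powr (-s/2)
    < 2 * ((c - 1/2) powr (-s) - (c + 1/2) powr (-s))"
proof -
  obtain R1 where
    D1: "(c - 1) powr (-s) - (c + 1) powr (-s) = 2 * 1 * s * c powr (-s - 1)
      + 1^3 / 3 * pochhammer s 3 * c powr (-s - 3) + 1^5 / 60 * pochhammer s 5 * c powr (-s - 5) + R1"
    and R1: "R1 \<le> 1^7 / 2520 * pochhammer s 7 * (c - 1) powr (-s - 7)"
    using neg_powr_sym_diff_Taylor[of s 1 c] s c by auto
  obtain R2 where
    D2: "(c - 1/2) powr (-s) - (c + 1/2) powr (-s) = 2 * (1/2) * s * c powr (-s - 1)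
      + (1/2)^3 / 3 * pochhammer s 3 * c powr (-s - 3) + (1/2)^5 / 60 * pochhammer s 5 * c powr (-s - 5) + R2"
    and R2: "0 \<le> R2"
    using neg_powr_sym_diff_Taylor[of s "1/2" c] s c by auto
  have "2 * (s + 2) * c powr (-s - 3) < (c - 1) powr (-s - 2) - (c + 1) powr (-s - 2)"
    using neg_powr_sym_diff_gt_tangent[of "s + 2" 1 c] s c by (simp add: algebra_simps)
  then have "s/4 * (2 * (s + 2) * c powr (-s - 3)) < s/4 * ((c - 1) powr (-s - 2) - (c + 1) powr (-s - 2))"
    using s by (intro mult_strict_left_mono) auto
  then have tangent: "s*(s+2)/2 * c powr (-s - 3) < s/4 * (c - 1) powr (-s - 2) - s/4 * (c + 1) powr (-s - 2)"
    by (simp add: field_simps)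
  have "((c - 1)^2 + 1/2) powr (-s/2) \<le>
      (c - 1) powr (-s) - s/4 * (c - 1) powr (-s - 2) + s*(s+2)/32 * (c - 1) powr (-s - 4)"
    using shifted_square_neg_powr_upper[of "c - 1" s] s c by simp
  moreover have "(c + 1) powr (-s) - s/4 * (c + 1) powr (-s - 2) \<le> ((c + 1)^2 + 1/2) powr (-s/2)"
    using shifted_square_neg_powr_lower[of "c + 1" s] s c by simp
  moreover have "(c - 1) powr (-s) - (c + 1) powr (-s) \<le> 2 * ((c - 1/2) powr (-s) - (c + 1/2) powr (-s))
      + pochhammer s 3 * c powr (-s - 3) / 4 + pochhammer s 5 * c powr (-s - 5) / 64
      + pochhammer s 7 * (c - 1) powr (-s - 7) / 2520"
    unfolding D1 D2 using R1 R2 by (simp add: power_divide)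
  ultimately show ?thesis
    using tangent lower_step_remainder_bound[OF s c] by linarith
qed

lemma telescope_bounds_suminf:
  fixes d L U :: "nat \<Rightarrow> real"
  assumes "L \<longlonglongrightarrow> 0" "U \<longlonglongrightarrow> 0"
    and lower: "\<And>k. L k - L (Suc k) < d k" and upper: "\<And>k. d k < U k - U (Suc k)"
  shows "summable d" "L 0 < suminf d" "suminf d < U 0"
proof -
  have L: "(\<lambda>k. L k - L (Suc k)) sums L 0" and U: "(\<lambda>k. U k - U (Suc k)) sums U 0"
    using telescope_sums'[OF assms(1)] telescope_sums'[OF assms(2)] by simp_all
  define e where "e k = d k - (L k - L (Suc k))" for k
  have "summable e"
  proof (rule summable_comparison_test)
    show "\<exists>N. \<forall>k\<ge>N. norm (e k) \<le> (U k - U (Suc k)) - (L k - L (Suc k))"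
      using lower upper by (auto simp: e_def less_imp_le)
    show "summable (\<lambda>k. (U k - U (Suc k)) - (L k - L (Suc k)))"
      using L U by (intro summable_diff sums_summable)
  qed
  have "(\<lambda>k. e k + (L k - L (Suc k))) sums (suminf e + L 0)"
    using sums_add[OF summable_sums[OF \<open>summable e\<close>] L] .
  then have d_sums: "d sums (suminf e + L 0)"
    by (simp add: e_def)
  then show "summable d"
    by (rule sums_summable)
  have "0 < suminf e"
    using \<open>summable e\<close> lower by (intro suminf_pos) (simp_all add: e_def)
  then show "L 0 < suminf d"
    using sums_unique[OF d_sums] by simp
  have "(\<lambda>k. (U k - U (Suc k)) - d k) sums (U 0 - suminf d)"
    using U \<open>summable d\<close> by (intro sums_diff) (auto simp: summable_sums)
  moreover have "0 < (\<Sum>k. (U k - U (Suc k)) - d k)"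
    using calculation upper by (intro suminf_pos) (auto dest: sums_summable)
  ultimately show "suminf d < U 0"
    using sums_unique by fastforce
qed

lemma A_ns_bounds:
  fixes s :: real and n :: nat
  assumes s: "0 < s" "s \<le> 2/5" and n: "n \<ge> 3"
  shows "summable (\<lambda>k. 1 / real (n + 2*k) powr s - 1 / real (n + 2*k + 1) powr s)"
    and "1/2 * (real n ^ 2 - real n + 3/4) powr (-s/2) < A_ns n s"
    and "A_ns n s < 1/2 * (real n - 1/2) powr (-s)"
proof -
  define d where "d = (\<lambda>k. 1 / real (n + 2*k) powr s - 1 / real (n + 2*k + 1) powr s)"
  define L where "L k = 1/2 * (real (n + 2*k) ^ 2 - real (n + 2*k) + 3/4) powr (-s/2)" for k
  define U where "U k = 1/2 * (real (n + 2*k) - 1/2) powr (-s)" for k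
  have "L \<longlonglongrightarrow> 0" "U \<longlonglongrightarrow> 0"
    unfolding L_def U_def using s by real_asymp+
  moreover have "L k - L (Suc k) < d k \<and> d k < U k - U (Suc k)" for k
  proof -
    define c where "c = real (n + 2*k) + 1/2"
    have c: "c \<ge> 7/2" using n by (simp add: c_def)
    have "d k = (c - 1/2) powr (-s) - (c + 1/2) powr (-s)"
      using n by (simp add: d_def c_def powr_minus_divide add_ac)
    moreover have "L k = 1/2 * ((c - 1)^2 + 1/2) powr (-s/2)" "L (Suc k) = 1/2 * ((c + 1)^2 + 1/2) powr (-s/2)"
      by (simp_all add: L_def c_def power2_eq_square algebra_simps)
    moreover have "U k = 1/2 * (c - 1) powr (-s)" "U (Suc k) = 1/2 * (c + 1) powr (-s)"
      by (simp_all add: U_def c_def algebra_simps)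
    ultimately show ?thesis
      using lower_telescope_step[OF s c] neg_powr_sym_diff_half_less[of s 1 c] s c by auto
  qed
  ultimately have "summable d" "L 0 < suminf d" "suminf d < U 0"
    using telescope_bounds_suminf[of L U d] by auto
  then show "summable (\<lambda>k. 1 / real (n + 2*k) powr s - 1 / real (n + 2*k + 1) powr s)"
    and "1/2 * (real n ^ 2 - real n + 3/4) powr (-s/2) < A_ns n s"
    and "A_ns n s < 1/2 * (real n - 1/2) powr (-s)"
    unfolding A_ns_def d_def L_def U_def by simp_all
qed

lemma B_ns_eq_uminus_A_ns:
  assumes "summable (\<lambda>k. 1 / real (n + 2*k) powr s - 1 / real (n + 2*k + 1) powr s)"
  shows "B_ns n s = - A_ns n s"
  unfolding A_ns_def B_ns_def using suminf_minus[OF assms] by (simp add: algebra_simps)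

lemma square_minus_plus_quarter_powr_half:
  fixes n :: nat and s :: real
  assumes "n \<ge> 1"
  shows "(real n ^ 2 - real n + 1/4) powr (s/2) = (real n - 1/2) powr s"
proof -
  have "real n ^ 2 - real n + 1/4 = (real n - 1/2)^2"
    by (simp add: power2_eq_square algebra_simps)
  then show ?thesis
    using assms by (simp add: powr_square_base)
qed

lemma inverse_A_ns_bounds:
  fixes s :: real and n :: nat
  assumes s: "0 < s" "s \<le> 2/5" and n: "n \<ge> 3"
  shows "2 * (real n - 1/2) powr s < 1 / A_ns n s"
    and "1 / A_ns n s < 2 * (real n ^ 2 - real n + 3/4) powr (s/2)"
proof -
  have pos: "real n - 1/2 > 0" "real n ^ 2 - real n + 3/4 > 0"
    using n by (auto simp: power2_eq_square intro: add_pos_nonneg)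
  note bounds = A_ns_bounds(2,3)[OF s n]
  have "0 < 1/2 * (real n ^ 2 - real n + 3/4) powr (-s/2)"
    using pos by simp
  then have A_pos: "0 < A_ns n s"
    using bounds(1) by linarith
  show "2 * (real n - 1/2) powr s < 1 / A_ns n s"
    using bounds(2) A_pos pos by (simp add: powr_minus field_simps)
  show "1 / A_ns n s < 2 * (real n ^ 2 - real n + 3/4) powr (s/2)"
    using bounds(1) A_pos pos by (simp add: powr_minus field_simps)
qed

theorem lemma4p2:
  fixes p :: nat and s :: real
  assumes "odd p" and "p \<ge> 5" and "s = 2 / real p"
  shows "(\<forall>n::nat. even n \<and> n \<ge> 4 \<longrightarrow>
            2 * (real n - 1/2) powr s = 2 * (real n ^ 2 - real n + 1/4) powr (s/2) \<and>
            2 * (real n ^ 2 - real n + 1/4) powr (s/2) < 1 / A_ns n s \<and>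
            1 / A_ns n s < 2 * (real n ^ 2 - real n + 3/4) powr (s/2))
       \<and> (\<forall>n::nat. odd n \<and> n \<ge> 3 \<longrightarrow>
            - 2 * (real n ^ 2 - real n + 3/4) powr (s/2) < 1 / B_ns n s \<and>
            1 / B_ns n s < - 2 * (real n ^ 2 - real n + 1/4) powr (s/2) \<and>
            - 2 * (real n ^ 2 - real n + 1/4) powr (s/2) = - 2 * (real n - 1/2) powr s)"
proof -
  have "real p \<ge> 5"
    using assms(2) by simp
  then have s: "0 < s" "s \<le> 2/5"
    unfolding assms(3) by (auto simp: divide_simps)
  have "1 / B_ns n s = - (1 / A_ns n s)" if "n \<ge> 3" for n
    using B_ns_eq_uminus_A_ns[OF A_ns_bounds(1)[OF s that]] by simp
  then show ?thesis
    using inverse_A_ns_bounds[OF s] square_minus_plus_quarter_powr_half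
    by (auto simp: numeral_eq_Suc)
qed

end
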